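(* Let $\mathcal{X}$ be a finite set, $\mathcal{Y}=\{-1,1\}$, and $P_{X,Y}$ the empirical distribution of $n$ samples $\{(x_i,y_i)\}_{i=1}^n$ with $P_Y(-1)=P_Y(1)=\frac12$. Let $f:\mathcal{X}\to\mathbb{R}^d$ and $\lambda>0$. Define $\tilde L_{\mathsf{SVM}}(f;\lambda) = 1-\frac{1}{2\lambda}\left\|\mathbb{E}[f(X)Y]\right\|^2$, $M = \max_{x\in\mathcal{X}}\|\tilde f(x)\|$ with $\tilde f(x)=f(x)-\mathbb{E}[f(X)]$, and $\lambda_{\mathrm T} = M\left\|\mathbb{E}[f(X)Y]\right\|$. Then $$\tilde L_{\mathsf{SVM}}(f;\lambda)\le L^*_{\mathsf{SVM}}(f;\lambda)\le \tilde L_{\mathsf{SVM}}(f;\lambda) + \left(\frac{\lambda_{\mathrm T}}{\lambda}-1\right)^+ .$$ Moreover, when $\lambda\ge\lambda_{\mathrm T}$, $L^*_{\mathsf{SVM}}(f;\lambda) = \tilde L_{\mathsf{SVM}}(f;\lambda)$, which is achieved by $w_{\mathsf{SVM}} = \frac1\lambda\mathbb{E}[f(X)Y]$, $b_{\mathsf{SVM}} = -\langle w_{\mathsf{SVM}},\mathbb{E}[f(X)]\rangle$, and the resulting SVM prediction is $$\hat y_{\mathsf{SVM}}(x;f,\lambda) = \mathrm{sign}\left(\left\langle\mathbb{E}[\tilde f(X)Y],\tilde f(x)\right\rangle\right) = \arg\min_{y\in\mathcal{Y}}\left\|f(x)-\mathbb{E}[f(X)\mid Y=y]\right\|.$$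
   Context: Expectations are with respect to $P_{X,Y}$, where $P_{X,Y}(x,y)=\frac1n\sum_{i=1}^n\mathbb{1}\{x_i=x,y_i=y\}$. $x^+=\max\{0,x\}$. The hinge loss is $\ell_{\mathrm{hinge}}(y,z)=(1-yz)^+$. For $w\in\mathbb{R}^d$, $b\in\mathbb{R}$, the SVM loss is $L_{\mathsf{SVM}}(f,w,b;\lambda) = \mathbb{E}[\ell_{\mathrm{hinge}}(Y,\langle w,f(X)\rangle+b)] + \frac\lambda2\|w\|^2$; $(w_{\mathsf{SVM}},b_{\mathsf{SVM}})$ denotes a minimizer, $L^*_{\mathsf{SVM}}(f;\lambda)$ the minimum value, and the SVM prediction is $\hat y_{\mathsf{SVM}}(x;f,\lambda) = \mathrm{sign}(\langle w_{\mathsf{SVM}},f(x)\rangle + b_{\mathsf{SVM}})$. *)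

theory Defs
  imports "HOL-Analysis.Analysis"
begin

text \<open>Empirical distribution of n samples (xs i, ys i), i < n.
  Expectation of g(X,Y) under the empirical distribution: (1/n) * sum_{i<n} g(x_i,y_i).\<close>
definition emp_E :: "nat \<Rightarrow> (nat \<Rightarrow> 'b::real_vector) \<Rightarrow> 'b" where
  "emp_E n g = (1 / real n) *\<^sub>R (\<Sum>i<n. g i)"

definition emp_cond_E :: "nat \<Rightarrow> (nat \<Rightarrow> real) \<Rightarrow> real \<Rightarrow> (nat \<Rightarrow> 'b::real_vector) \<Rightarrow> 'b" where
  "emp_cond_E n ys c g = (1 / real (card {i. i < n \<and> ys i = c})) *\<^sub>R (\<Sum>i\<in>{i. i < n \<and> ys i = c}. g i)"

definition pos_part :: "real \<Rightarrow> real" where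
  "pos_part t = max 0 t"

definition hinge :: "real \<Rightarrow> real \<Rightarrow> real" where
  "hinge y z = pos_part (1 - y * z)"

definition L_SVM :: "nat \<Rightarrow> (nat \<Rightarrow> 'a) \<Rightarrow> (nat \<Rightarrow> real) \<Rightarrow> ('a \<Rightarrow> 'v::real_inner)
    \<Rightarrow> real \<Rightarrow> 'v \<Rightarrow> real \<Rightarrow> real" where
  "L_SVM n xs ys f lam w b =
     emp_E n (\<lambda>i. hinge (ys i) (inner w (f (xs i)) + b)) + lam / 2 * (norm w)\<^sup>2"

definition L_SVM_star :: "nat \<Rightarrow> (nat \<Rightarrow> 'a) \<Rightarrow> (nat \<Rightarrow> real) \<Rightarrow> ('a \<Rightarrow> 'v::real_inner)
    \<Rightarrow> real \<Rightarrow> real" where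
  "L_SVM_star n xs ys f lam = Inf ((\<lambda>(w, b). L_SVM n xs ys f lam w b) ` UNIV)"

definition EfY :: "nat \<Rightarrow> (nat \<Rightarrow> 'a) \<Rightarrow> (nat \<Rightarrow> real) \<Rightarrow> ('a \<Rightarrow> 'v::real_vector) \<Rightarrow> 'v" where
  "EfY n xs ys f = emp_E n (\<lambda>i. ys i *\<^sub>R f (xs i))"

definition L_tilde :: "nat \<Rightarrow> (nat \<Rightarrow> 'a) \<Rightarrow> (nat \<Rightarrow> real) \<Rightarrow> ('a \<Rightarrow> 'v::real_normed_vector)
    \<Rightarrow> real \<Rightarrow> real" where
  "L_tilde n xs ys f lam = 1 - 1 / (2 * lam) * (norm (EfY n xs ys f))\<^sup>2"

definition f_tilde :: "nat \<Rightarrow> (nat \<Rightarrow> 'a) \<Rightarrow> ('a \<Rightarrow> 'v::real_vector) \<Rightarrow> 'a \<Rightarrow> 'v" where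
  "f_tilde n xs f x = f x - emp_E n (\<lambda>i. f (xs i))"

definition M_const :: "'a set \<Rightarrow> nat \<Rightarrow> (nat \<Rightarrow> 'a) \<Rightarrow> ('a \<Rightarrow> 'v::real_normed_vector) \<Rightarrow> real" where
  "M_const X n xs f = Max ((\<lambda>x. norm (f_tilde n xs f x)) ` X)"

definition lambda_T :: "'a set \<Rightarrow> nat \<Rightarrow> (nat \<Rightarrow> 'a) \<Rightarrow> (nat \<Rightarrow> real) \<Rightarrow> ('a \<Rightarrow> 'v::real_normed_vector) \<Rightarrow> real" where
  "lambda_T X n xs ys f = M_const X n xs f * norm (EfY n xs ys f)"

definition nearest_class_mean :: "nat \<Rightarrow> (nat \<Rightarrow> 'a) \<Rightarrow> (nat \<Rightarrow> real) \<Rightarrow> ('a \<Rightarrow> 'v::real_normed_vector)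
    \<Rightarrow> 'a \<Rightarrow> real set" where
  "nearest_class_mean n xs ys f x =
     {y \<in> {-1, 1}. \<forall>y'\<in>{-1, 1}.
        norm (f x - emp_cond_E n ys y (\<lambda>i. f (xs i))) \<le> norm (f x - emp_cond_E n ys y' (\<lambda>i. f (xs i)))}"

end

theory Submission
  imports Defs
begin

(* Balanced labels give E[Y] = 0, so E[Y (<w, f X> + b)] = <w, mu> with mu = E[f(X) Y] for every
   bias b.  Since hinge(y, z) >= 1 - y z, every (w, b) has loss at least
   1 - <w, mu> + lam/2 |w|^2, which is at least 1 - |mu|^2/(2 lam) by Fenchel-Young, with equality
   at w = mu/lam.  With b = -<w, E f(X)> the margins of this w are <mu, f~(x_i)>/lam, at most
   lambda_T/lam in absolute value by Cauchy-Schwarz; so the hinge exceeds its linear part by at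
   most (lambda_T/lam - 1)^+, and not at all when lam >= lambda_T.  Finally the class means are
   E f(X) + y mu, so the nearest one is selected by the sign of <mu, f~(x)>. *)

lemma emp_E_const: "n > 0 \<Longrightarrow> emp_E n (\<lambda>_. c) = c"
  by (simp add: emp_E_def sum_constant_scaleR)

lemma emp_E_add: "emp_E n (\<lambda>i. g i + h i) = emp_E n g + emp_E n h"
  by (simp add: emp_E_def sum.distrib scaleR_add_right)

lemma emp_E_diff: "emp_E n (\<lambda>i. g i - h i) = emp_E n g - emp_E n h"
  by (simp add: emp_E_def sum_subtractf scaleR_diff_right)

lemma emp_E_scaleR_right: "emp_E n (\<lambda>i. a i *\<^sub>R c) = emp_E n a *\<^sub>R c"
  by (simp add: emp_E_def scaleR_sum_left[symmetric])

lemma emp_E_mono: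
  fixes g h :: "nat \<Rightarrow> real"
  assumes "\<And>i. i < n \<Longrightarrow> g i \<le> h i"
  shows "emp_E n g \<le> emp_E n h"
  unfolding emp_E_def using assms by (auto intro!: divide_right_mono sum_mono)

lemma hinge_ge: "1 - y * z \<le> hinge y z"
  by (simp add: hinge_def pos_part_def)

lemma hinge_le: "\<bar>y * z\<bar> \<le> c \<Longrightarrow> hinge y z \<le> 1 - y * z + pos_part (c - 1)"
  by (auto simp: hinge_def pos_part_def abs_le_iff)

lemma fenchel_young_half_norm_sq:
  fixes w u :: "'v::real_inner"
  assumes "lam > 0"
  shows "inner w u \<le> lam / 2 * (norm w)\<^sup>2 + (norm u)\<^sup>2 / (2 * lam)"
proof -
  have "0 \<le> (norm (lam *\<^sub>R w - u))\<^sup>2 / (2 * lam)"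
    using assms by simp
  also have "\<dots> = lam / 2 * (norm w)\<^sup>2 - inner w u + (norm u)\<^sup>2 / (2 * lam)"
    using assms unfolding power2_norm_eq_inner
    by (simp add: inner_diff inner_commute field_simps power2_eq_square)
  finally show ?thesis by simp
qed

lemma fenchel_young_half_norm_sq_eq:
  fixes u :: "'v::real_inner"
  assumes "lam > 0"
  shows "inner ((1 / lam) *\<^sub>R u) u
    = lam / 2 * (norm ((1 / lam) *\<^sub>R u))\<^sup>2 + (norm u)\<^sup>2 / (2 * lam)"
  using assms by (simp add: power_mult_distrib power2_eq_square field_simps flip: power2_norm_eq_inner)

lemma norm_diff_le_norm_add_iff:
  fixes u v :: "'v::real_inner"
  shows "norm (u - v) \<le> norm (u + v) \<longleftrightarrow> 0 \<le> inner u v"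
  unfolding norm_le by (simp add: inner_add inner_diff inner_commute)

lemma pm1_nonneg_mult_eq:
  fixes t :: real
  shows "{y \<in> {-1, 1}. 0 \<le> y * t} = (if t = 0 then {-1, 1} else {sgn t})"
  by (auto simp: sgn_if)

lemma sum_label_class:
  fixes n :: nat and ys :: "nat \<Rightarrow> real" and g :: "nat \<Rightarrow> 'v::real_vector"
  assumes "\<forall>i<n. ys i \<in> {-1, 1}" and "y \<in> {-1, 1}"
  shows "(\<Sum>i\<in>{i. i < n \<and> ys i = y}. g i) = (\<Sum>i<n. ((1 + y * ys i) / 2) *\<^sub>R g i)"
proof -
  have "(\<Sum>i\<in>{i. i < n \<and> ys i = y}. g i) = (\<Sum>i<n. if ys i = y then g i else 0)"
    using sum.inter_filter[of "{..<n}" g "\<lambda>i. ys i = y"] by simp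
  also have "\<dots> = (\<Sum>i<n. ((1 + y * ys i) / 2) *\<^sub>R g i)"
    by (rule sum.cong) (use assms in auto)
  finally show ?thesis .
qed

locale balanced_sample =
  fixes n :: nat and ys :: "nat \<Rightarrow> real"
  assumes sample_nonempty: "n > 0"
    and labels_pm1: "\<forall>i<n. ys i \<in> {-1, 1}"
    and balanced: "2 * card {i. i < n \<and> ys i = 1} = n"
begin

lemma card_label_class_sum:
  assumes "y \<in> {-1, 1}"
  shows "real (card {i. i < n \<and> ys i = y}) = (real n + y * (\<Sum>i<n. ys i)) / 2"
  using sum_label_class[OF labels_pm1 assms, of "\<lambda>_. 1::real"]
  by (simp add: sum.distrib sum_divide_distrib sum_distrib_left add_divide_distrib)

lemma sum_labels: "(\<Sum>i<n. ys i) = 0"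
  using card_label_class_sum[of 1] balanced by simp

lemma card_label_class:
  "y \<in> {-1, 1} \<Longrightarrow> real (card {i. i < n \<and> ys i = y}) = real n / 2"
  using card_label_class_sum sum_labels by simp

lemma emp_E_label_scaleR: "emp_E n (\<lambda>i. ys i *\<^sub>R c) = 0"
  by (simp add: emp_E_scaleR_right emp_E_def sum_labels)

lemma emp_E_label_centered:
  "emp_E n (\<lambda>i. ys i *\<^sub>R (g i - c)) = emp_E n (\<lambda>i. ys i *\<^sub>R g i)"
  by (simp add: scaleR_diff_right emp_E_diff emp_E_label_scaleR)

lemma emp_E_label_margin:
  "emp_E n (\<lambda>i. ys i * (inner w (g i) + b)) = inner w (emp_E n (\<lambda>i. ys i *\<^sub>R g i))"
proof -
  have "(\<Sum>i<n. ys i * (inner w (g i) + b))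
      = (\<Sum>i<n. inner w (ys i *\<^sub>R g i)) + (\<Sum>i<n. ys i) * b"
    by (simp add: distrib_left sum.distrib sum_distrib_right)
  then show ?thesis
    by (simp add: emp_E_def inner_sum_right sum_labels)
qed

lemma emp_cond_E_label:
  assumes "y \<in> {-1, 1}"
  shows "emp_cond_E n ys y g = emp_E n g + y *\<^sub>R emp_E n (\<lambda>i. ys i *\<^sub>R g i)"
proof -
  have "(\<Sum>i\<in>{i. i < n \<and> ys i = y}. g i)
      = (1 / 2) *\<^sub>R ((\<Sum>i<n. g i) + y *\<^sub>R (\<Sum>i<n. ys i *\<^sub>R g i))"
    unfolding sum_label_class[OF labels_pm1 assms]
    by (simp add: scaleR_add_left add_divide_distrib sum.distrib scaleR_sum_right scaleR_add_right)
  then show ?thesis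
    unfolding emp_cond_E_def emp_E_def card_label_class[OF assms]
    by (simp add: scaleR_add_right)
qed

end

definition svm_weight ::
    "nat \<Rightarrow> (nat \<Rightarrow> 'a) \<Rightarrow> (nat \<Rightarrow> real) \<Rightarrow> ('a \<Rightarrow> 'v::real_inner) \<Rightarrow> real \<Rightarrow> 'v" where
  "svm_weight n xs ys f lam = (1 / lam) *\<^sub>R EfY n xs ys f"

definition svm_bias ::
    "nat \<Rightarrow> (nat \<Rightarrow> 'a) \<Rightarrow> (nat \<Rightarrow> real) \<Rightarrow> ('a \<Rightarrow> 'v::real_inner) \<Rightarrow> real \<Rightarrow> real" where
  "svm_bias n xs ys f lam = - inner (svm_weight n xs ys f lam) (emp_E n (\<lambda>i. f (xs i)))"

lemma svm_score_eq:
  "inner (svm_weight n xs ys f lam) (f x) + svm_bias n xs ys f lam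
     = inner (EfY n xs ys f) (f_tilde n xs f x) / lam"
  by (simp add: svm_weight_def svm_bias_def f_tilde_def inner_diff_right diff_divide_distrib)

lemma norm_f_tilde_le_M_const:
  "finite X \<Longrightarrow> x \<in> X \<Longrightarrow> norm (f_tilde n xs f x) \<le> M_const X n xs f"
  unfolding M_const_def by (rule Max_ge) auto

lemma svm_score_bound:
  assumes "finite X" and "x \<in> X" and "lam > 0"
  shows "\<bar>inner (svm_weight n xs ys f lam) (f x) + svm_bias n xs ys f lam\<bar>
    \<le> lambda_T X n xs ys f / lam"
proof -
  have "\<bar>inner (EfY n xs ys f) (f_tilde n xs f x)\<bar>
      \<le> norm (EfY n xs ys f) * norm (f_tilde n xs f x)"
    by (rule Cauchy_Schwarz_ineq2)
  also have "\<dots> \<le> norm (EfY n xs ys f) * M_const X n xs f"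
    by (intro mult_left_mono norm_f_tilde_le_M_const assms(1,2) norm_ge_zero)
  finally show ?thesis
    using assms(3) by (simp add: svm_score_eq lambda_T_def divide_right_mono mult.commute)
qed

lemma sgn_svm_score:
  "lam > 0 \<Longrightarrow> sgn (inner (svm_weight n xs ys f lam) (f x) + svm_bias n xs ys f lam)
     = sgn (inner (EfY n xs ys f) (f_tilde n xs f x))"
  by (simp add: svm_score_eq)

context balanced_sample
begin

lemma L_SVM_ge_linearized:
  fixes f :: "'a \<Rightarrow> 'v::real_inner"
  shows "1 - inner w (EfY n xs ys f) + lam / 2 * (norm w)\<^sup>2 \<le> L_SVM n xs ys f lam w b"
proof -
  have "1 - inner w (EfY n xs ys f) = emp_E n (\<lambda>i. 1 - ys i * (inner w (f (xs i)) + b))"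
    by (simp add: emp_E_diff emp_E_const sample_nonempty emp_E_label_margin EfY_def)
  also have "\<dots> \<le> emp_E n (\<lambda>i. hinge (ys i) (inner w (f (xs i)) + b))"
    by (rule emp_E_mono) (rule hinge_ge)
  finally show ?thesis
    unfolding L_SVM_def by simp
qed

lemma L_SVM_le_linearized:
  fixes f :: "'a \<Rightarrow> 'v::real_inner"
  assumes "\<forall>i<n. \<bar>inner w (f (xs i)) + b\<bar> \<le> c"
  shows "L_SVM n xs ys f lam w b
    \<le> 1 - inner w (EfY n xs ys f) + lam / 2 * (norm w)\<^sup>2 + pos_part (c - 1)"
proof -
  have "emp_E n (\<lambda>i. hinge (ys i) (inner w (f (xs i)) + b))
      \<le> emp_E n (\<lambda>i. 1 - ys i * (inner w (f (xs i)) + b) + pos_part (c - 1))"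
  proof (rule emp_E_mono, rule hinge_le)
    fix i
    assume "i < n"
    then show "\<bar>ys i * (inner w (f (xs i)) + b)\<bar> \<le> c"
      using labels_pm1 assms by (auto simp: abs_mult)
  qed
  also have "\<dots> = 1 - inner w (EfY n xs ys f) + pos_part (c - 1)"
    by (simp add: emp_E_add emp_E_diff emp_E_const sample_nonempty emp_E_label_margin EfY_def)
  finally show ?thesis
    unfolding L_SVM_def by simp
qed

lemma L_tilde_le_L_SVM:
  fixes f :: "'a \<Rightarrow> 'v::real_inner"
  assumes "lam > 0"
  shows "L_tilde n xs ys f lam \<le> L_SVM n xs ys f lam w b"
  using L_SVM_ge_linearized[of w xs f lam b]
    fenchel_young_half_norm_sq[OF assms, of w "EfY n xs ys f"]
  unfolding L_tilde_def by simp

lemma L_tilde_le_L_SVM_star: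
  fixes f :: "'a \<Rightarrow> 'v::real_inner"
  assumes "lam > 0"
  shows "L_tilde n xs ys f lam \<le> L_SVM_star n xs ys f lam"
  unfolding L_SVM_star_def by (rule cInf_greatest) (auto intro: L_tilde_le_L_SVM[OF assms])

lemma L_SVM_star_le_L_SVM:
  fixes f :: "'a \<Rightarrow> 'v::real_inner"
  assumes "lam > 0"
  shows "L_SVM_star n xs ys f lam \<le> L_SVM n xs ys f lam w b"
proof -
  have "bdd_below ((\<lambda>(w, b). L_SVM n xs ys f lam w b) ` UNIV)"
    by (rule bdd_belowI[of _ "L_tilde n xs ys f lam"]) (auto intro: L_tilde_le_L_SVM[OF assms])
  then show ?thesis
    unfolding L_SVM_star_def by (rule cInf_lower[rotated]) auto
qed

lemma L_SVM_svm_solution_le: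
  fixes f :: "'a \<Rightarrow> 'v::real_inner"
  assumes "finite X" and "\<forall>i<n. xs i \<in> X" and "lam > 0"
  shows "L_SVM n xs ys f lam (svm_weight n xs ys f lam) (svm_bias n xs ys f lam)
    \<le> L_tilde n xs ys f lam + pos_part (lambda_T X n xs ys f / lam - 1)"
proof -
  let ?w = "svm_weight n xs ys f lam" and ?b = "svm_bias n xs ys f lam"
  have "\<forall>i<n. \<bar>inner ?w (f (xs i)) + ?b\<bar> \<le> lambda_T X n xs ys f / lam"
    using svm_score_bound[OF assms(1) _ assms(3)] assms(2) by blast
  then have "L_SVM n xs ys f lam ?w ?b
      \<le> 1 - inner ?w (EfY n xs ys f) + lam / 2 * (norm ?w)\<^sup>2
        + pos_part (lambda_T X n xs ys f / lam - 1)"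
    by (rule L_SVM_le_linearized)
  also have "1 - inner ?w (EfY n xs ys f) + lam / 2 * (norm ?w)\<^sup>2 = L_tilde n xs ys f lam"
    using fenchel_young_half_norm_sq_eq[OF assms(3), of "EfY n xs ys f"]
    unfolding L_tilde_def svm_weight_def by simp
  finally show ?thesis .
qed

lemma emp_E_label_f_tilde:
  "emp_E n (\<lambda>i. ys i *\<^sub>R f_tilde n xs f (xs i)) = EfY n xs ys f"
  unfolding f_tilde_def EfY_def by (rule emp_E_label_centered)

lemma nearest_class_mean_eq:
  fixes f :: "'a \<Rightarrow> 'v::real_inner"
  shows "nearest_class_mean n xs ys f x
    = (if inner (EfY n xs ys f) (f_tilde n xs f x) = 0 then {-1, 1}
       else {sgn (inner (EfY n xs ys f) (f_tilde n xs f x))})"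
proof -
  define u where "u = f_tilde n xs f x"
  define \<mu> where "\<mu> = EfY n xs ys f"
  have "f x - emp_cond_E n ys y (\<lambda>i. f (xs i)) = u - y *\<^sub>R \<mu>" if "y \<in> {-1, 1}" for y
    unfolding emp_cond_E_label[OF that] by (simp add: u_def \<mu>_def f_tilde_def EfY_def)
  moreover have "norm (u - \<mu>) \<le> norm (u + \<mu>) \<longleftrightarrow> 0 \<le> inner \<mu> u"
    by (simp add: norm_diff_le_norm_add_iff inner_commute)
  moreover have "norm (u + \<mu>) \<le> norm (u - \<mu>) \<longleftrightarrow> inner \<mu> u \<le> 0"
    using norm_diff_le_norm_add_iff[of u "- \<mu>"] by (simp add: inner_commute)
  ultimately have "nearest_class_mean n xs ys f x = {y \<in> {-1, 1}. 0 \<le> y * inner \<mu> u}"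
    unfolding nearest_class_mean_def by auto
  then show ?thesis
    unfolding u_def \<mu>_def pm1_nonneg_mult_eq .
qed

end

theorem theorem1:
  fixes X :: "'a set" and n :: nat and xs :: "nat \<Rightarrow> 'a" and ys :: "nat \<Rightarrow> real"
    and f :: "'a \<Rightarrow> real ^ 'd" and lam :: real
  assumes "finite X"
    and "n > 0"
    and "\<forall>i<n. xs i \<in> X"
    and "\<forall>i<n. ys i \<in> {-1, 1}"
    and "2 * card {i. i < n \<and> ys i = 1} = n"
    and "lam > 0"
  shows "L_tilde n xs ys f lam \<le> L_SVM_star n xs ys f lam
    \<and> L_SVM_star n xs ys f lam
           \<le> L_tilde n xs ys f lam + pos_part (lambda_T X n xs ys f / lam - 1)
    \<and> (lam \<ge> lambda_T X n xs ys f \<longrightarrow>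
           (let w0 = (1 / lam) *\<^sub>R EfY n xs ys f;
                b0 = - inner w0 (emp_E n (\<lambda>i. f (xs i)))
            in L_SVM_star n xs ys f lam = L_tilde n xs ys f lam
             \<and> L_SVM n xs ys f lam w0 b0 = L_SVM_star n xs ys f lam
             \<and> (\<forall>x\<in>X.
                  sgn (inner w0 (f x) + b0)
                    = sgn (inner (emp_E n (\<lambda>i. ys i *\<^sub>R f_tilde n xs f (xs i))) (f_tilde n xs f x))
                \<and> (sgn (inner (emp_E n (\<lambda>i. ys i *\<^sub>R f_tilde n xs f (xs i))) (f_tilde n xs f x)) \<noteq> 0
                     \<longrightarrow> nearest_class_mean n xs ys f x
                           = {sgn (inner (emp_E n (\<lambda>i. ys i *\<^sub>R f_tilde n xs f (xs i))) (f_tilde n xs f x))})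
                \<and> (sgn (inner (emp_E n (\<lambda>i. ys i *\<^sub>R f_tilde n xs f (xs i))) (f_tilde n xs f x)) = 0
                     \<longrightarrow> nearest_class_mean n xs ys f x = {-1, 1}))))"
proof -
  interpret balanced_sample n ys
    using assms(2,4,5) by unfold_locales
  let ?w0 = "svm_weight n xs ys f lam" and ?b0 = "svm_bias n xs ys f lam"
  have lower: "L_tilde n xs ys f lam \<le> L_SVM_star n xs ys f lam"
    using L_tilde_le_L_SVM_star[OF assms(6)] .
  have star_le: "L_SVM_star n xs ys f lam \<le> L_SVM n xs ys f lam ?w0 ?b0"
    using L_SVM_star_le_L_SVM[OF assms(6)] .
  have upper: "L_SVM n xs ys f lam ?w0 ?b0
      \<le> L_tilde n xs ys f lam + pos_part (lambda_T X n xs ys f / lam - 1)"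
    using L_SVM_svm_solution_le[OF assms(1,3,6)] .
  have no_slack: "pos_part (lambda_T X n xs ys f / lam - 1) = 0"
    if "lambda_T X n xs ys f \<le> lam"
    using that assms(6) by (simp add: pos_part_def)
  show ?thesis
    unfolding Let_def svm_weight_def[symmetric] svm_bias_def[symmetric]
    using lower star_le upper no_slack
    by (auto simp: sgn_svm_score[OF assms(6)] emp_E_label_f_tilde nearest_class_mean_eq sgn_0_0)
qed

end
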